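(* Let $k\ge 2$, $q\in\{1,\dots,k-1\}$, $n\ge 3$ and $i\ge 1$ be integers. Consider the cylindrical Lights Out game on a board with $i$ rows and $n$ columns whose lights have $k$ states, with every light initially in state $k-q$. Define the integer sequence $S_0=0$, $S_1=-q$, and $S_j=-q-S_{j-2}-3S_{j-1}$ for $j\ge 2$. Then the game is one-pass solvable if and only if $S_i\equiv 0 \pmod{k}$.
   Context: Cylindrical Lights Out game: a grid of buttons with $i$ rows (numbered $1,\dots,i$ from top to bottom) and $n$ columns, whose left and right sides are identified, so column $1$ and column $n$ are adjacent; rows do not wrap around. Each button has a light whose state is an element of $\mathbb{Z}/k\mathbb{Z}$, state $0$ meaning "off". Pressing a button once adds $1 \pmod k$ to the state of its own light and to the states of the lights orthogonally adjacent to it (above, below, left, right, where they exist, with columns taken cyclically). One-pass chasing: for $r=2,3,\dots,i$ in turn, press each button in row $r$ the number of times in $\{0,\dots,k-1\}$ needed to bring the light directly above it (in row $r-1$) to state $0$. The game is one-pass solvable if after this procedure all lights on the board are in state $0$. *)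

theory Defs
  imports Main
begin

text \<open>Board: rows 1..i, columns 0..n-1 (cyclic). A board state assigns to each
position (row, column) an integer representing an element of Z/kZ (kept in 0..k-1).\<close>

type_synonym board = "nat \<Rightarrow> nat \<Rightarrow> int"

definition on_board :: "nat \<Rightarrow> nat \<Rightarrow> nat \<Rightarrow> nat \<Rightarrow> bool" where
  "on_board i n r c \<longleftrightarrow> 1 \<le> r \<and> r \<le> i \<and> c < n"

definition adjacent :: "nat \<Rightarrow> nat \<Rightarrow> nat \<Rightarrow> nat \<Rightarrow> nat \<Rightarrow> bool" where
  "adjacent n r c r' c' \<longleftrightarrow>
     (c' = c \<and> (r' = r + 1 \<or> r = r' + 1)) \<or>
     (r' = r \<and> (c' = (c + 1) mod n \<or> c = (c' + 1) mod n))"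

definition press :: "nat \<Rightarrow> nat \<Rightarrow> nat \<Rightarrow> nat \<Rightarrow> nat \<Rightarrow> board \<Rightarrow> board" where
  "press k i n r c B = (\<lambda>r' c'.
     if on_board i n r' c' \<and> ((r' = r \<and> c' = c) \<or> adjacent n r c r' c')
     then (B r' c' + 1) mod int k else B r' c')"

definition chase_button :: "nat \<Rightarrow> nat \<Rightarrow> nat \<Rightarrow> nat \<Rightarrow> board \<Rightarrow> nat \<Rightarrow> board" where
  "chase_button k i n r B c = (press k i n r c ^^ nat ((- B (r - 1) c) mod int k)) B"

definition chase_row :: "nat \<Rightarrow> nat \<Rightarrow> nat \<Rightarrow> board \<Rightarrow> nat \<Rightarrow> board" where
  "chase_row k i n B r = foldl (chase_button k i n r) B [0..<n]"

definition one_pass_chase :: "nat \<Rightarrow> nat \<Rightarrow> nat \<Rightarrow> board \<Rightarrow> board" where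
  "one_pass_chase k i n B = foldl (chase_row k i n) B [2..<i+1]"

definition one_pass_solvable :: "nat \<Rightarrow> nat \<Rightarrow> nat \<Rightarrow> board \<Rightarrow> bool" where
  "one_pass_solvable k i n B \<longleftrightarrow>
     (\<forall>r c. on_board i n r c \<longrightarrow> one_pass_chase k i n B r c = 0)"

fun S :: "int \<Rightarrow> nat \<Rightarrow> int" where
  "S q 0 = 0"
| "S q (Suc 0) = - q"
| "S q (Suc (Suc j)) = - q - S q j - 3 * S q (Suc j)"

end

theory Submission
  imports Defs
begin

text \<open>
  Modulo k, pressing buttons commutes, so a board reached from the uniform board of value -q
  is determined by how often each button has been pressed. By the rotational symmetry of the
  cylinder, one-pass chasing presses every button of row r the same number of times P r: the
  light above a button of row r has by then received the presses of three buttons of row r - 1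
  and one of row r - 2, so P r = q - 3 P (r - 1) - P (r - 2) modulo k, with P 1 = 0. Thus
  P (j + 1) = - S j. All rows but the last are cleared, and every light of row i ends in state
  -q + 3 P i + P (i - 1) = - P (i + 1) = S i modulo k.
\<close>

lemma cyclic_succ_eq_iff_pred:
  fixes c d n :: nat
  assumes "c < n" "d < n"
  shows "c = (d + 1) mod n \<longleftrightarrow> d = (c + n - 1) mod n"
  using assms by (cases c) (auto simp: mod_Suc)

lemma cyclic_neighbours_distinct:
  fixes c n :: nat
  assumes "c < n" "3 \<le> n"
  shows "(c + 1) mod n \<noteq> c" "(c + n - 1) mod n \<noteq> c"
    and "(c + 1) mod n \<noteq> (c + n - 1) mod n"
  using assms by (cases c; auto simp: mod_Suc)+

type_synonym press_counts = "nat \<Rightarrow> nat \<Rightarrow> int"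

definition press_effect :: "nat \<Rightarrow> nat \<Rightarrow> press_counts \<Rightarrow> nat \<Rightarrow> nat \<Rightarrow> int" where
  "press_effect i n X r c = (\<Sum>(r', c') \<in> {1..i} \<times> {..<n}.
     if (r = r' \<and> c = c') \<or> adjacent n r' c' r c then X r' c' else 0)"

definition closed_nbhd :: "nat \<Rightarrow> nat \<Rightarrow> nat \<Rightarrow> (nat \<times> nat) set" where
  "closed_nbhd n r c =
     {(r, c), (r + 1, c), (r - 1, c), (r, (c + 1) mod n), (r, (c + n - 1) mod n)}"

lemma affects_iff_mem_closed_nbhd:
  assumes "c < n" "c' < n"
  shows "(r = r' \<and> c = c') \<or> adjacent n r' c' r c \<longleftrightarrow> (r', c') \<in> closed_nbhd n r c"
  using cyclic_succ_eq_iff_pred[OF assms] cyclic_succ_eq_iff_pred[OF assms(2,1)]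
  unfolding adjacent_def closed_nbhd_def by auto

lemma press_effect_expand:
  assumes "1 \<le> r" "r \<le> i" "c < n" "3 \<le> n"
  shows "press_effect i n X r c = X r c + (if r < i then X (r + 1) c else 0)
     + (if 2 \<le> r then X (r - 1) c else 0) + X r ((c + 1) mod n) + X r ((c + n - 1) mod n)"
proof -
  let ?A = "{1..i} \<times> {..<n}"
  have "press_effect i n X r c = (\<Sum>(r', c') \<in> ?A \<inter> closed_nbhd n r c. X r' c')"
    unfolding press_effect_def
    by (subst sum.inter_restrict) (auto simp: affects_iff_mem_closed_nbhd[OF assms(3)] intro!: sum.cong)
  also have "\<dots> = (\<Sum>(r', c') \<in> closed_nbhd n r c. if (r', c') \<in> ?A then X r' c' else 0)"
    by (subst Int_commute, subst sum.inter_restrict) (auto simp: closed_nbhd_def intro!: sum.cong)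
  also have "\<dots> = X r c + (if r < i then X (r + 1) c else 0)
     + (if 2 \<le> r then X (r - 1) c else 0) + X r ((c + 1) mod n) + X r ((c + n - 1) mod n)"
    using assms cyclic_neighbours_distinct[OF assms(3,4)]
    by (auto simp: closed_nbhd_def algebra_simps)
  finally show ?thesis .
qed

definition add_presses :: "press_counts \<Rightarrow> nat \<Rightarrow> nat \<Rightarrow> int \<Rightarrow> press_counts" where
  "add_presses X r c t = (\<lambda>r' c'. X r' c' + (if r' = r \<and> c' = c then t else 0))"

lemma press_effect_add_presses:
  assumes "1 \<le> r" "r \<le> i" "c < n"
  shows "press_effect i n (add_presses X r c t) r'' c'' =
    press_effect i n X r'' c'' + (if (r'' = r \<and> c'' = c) \<or> adjacent n r c r'' c'' then t else 0)"
proof -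
  let ?t = "if (r'' = r \<and> c'' = c) \<or> adjacent n r c r'' c'' then t else 0"
  have "press_effect i n (add_presses X r c t) r'' c'' =
      press_effect i n X r'' c'' + (\<Sum>p \<in> {1..i} \<times> {..<n}. if p = (r, c) then ?t else 0)"
    unfolding press_effect_def add_presses_def sum.distrib[symmetric]
    by (rule sum.cong) (auto split: if_splits)
  also have "(\<Sum>p \<in> {1..i} \<times> {..<n}. if p = (r, c) then ?t else 0) = ?t"
    using assms by (subst sum.delta) auto
  finally show ?thesis .
qed

lemma press_effect_cong:
  assumes "\<And>r c. 1 \<le> r \<Longrightarrow> r \<le> i \<Longrightarrow> c < n \<Longrightarrow> X r c = Y r c"
  shows "press_effect i n X = press_effect i n Y"
  unfolding press_effect_def by (intro ext sum.cong) (auto simp: assms)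

lemma press_power_mod:
  "(press k i n r c ^^ m) B r' c' mod int k =
     (B r' c' + (if on_board i n r' c' \<and> ((r' = r \<and> c' = c) \<or> adjacent n r c r' c')
                 then int m else 0)) mod int k"
proof (induction m)
  case (Suc m)
  let ?pressed = "on_board i n r' c' \<and> ((r' = r \<and> c' = c) \<or> adjacent n r c r' c')"
  have "(press k i n r c ^^ Suc m) B r' c' mod int k =
      ((press k i n r c ^^ m) B r' c' + (if ?pressed then 1 else 0)) mod int k"
    by (auto simp: press_def)
  also have "\<dots> =
      (B r' c' + (if ?pressed then int m else 0) + (if ?pressed then 1 else 0)) mod int k"
    by (rule mod_add_cong[OF Suc.IH refl])
  also have "\<dots> = (B r' c' + (if ?pressed then int (Suc m) else 0)) mod int k"
    by (smt (verit) of_nat_Suc)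
  finally show ?case .
qed simp

definition reduced_board :: "nat \<Rightarrow> nat \<Rightarrow> nat \<Rightarrow> board \<Rightarrow> bool" where
  "reduced_board k i n B \<longleftrightarrow> (\<forall>r c. on_board i n r c \<longrightarrow> 0 \<le> B r c \<and> B r c < int k)"

lemma reduced_board_press_power:
  assumes "reduced_board k i n B" "0 < k"
  shows "reduced_board k i n ((press k i n r c ^^ m) B)"
  using assms by (induction m) (auto simp: reduced_board_def press_def)

definition reached_by_presses ::
    "nat \<Rightarrow> nat \<Rightarrow> nat \<Rightarrow> int \<Rightarrow> press_counts \<Rightarrow> board \<Rightarrow> bool" where
  "reached_by_presses k i n q X B \<longleftrightarrow>
     (\<forall>r c. on_board i n r c \<longrightarrow> B r c mod int k = (press_effect i n X r c - q) mod int k)"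

lemma reached_by_presses_press_power:
  assumes "reached_by_presses k i n q X B" "on_board i n r c" "int m mod int k = t mod int k"
  shows "reached_by_presses k i n q (add_presses X r c t) ((press k i n r c ^^ m) B)"
  unfolding reached_by_presses_def
proof (intro allI impI)
  fix r' c'
  assume on_board: "on_board i n r' c'"
  let ?affected = "(r' = r \<and> c' = c) \<or> adjacent n r c r' c'"
  have "(press k i n r c ^^ m) B r' c' mod int k =
      (B r' c' + (if ?affected then int m else 0)) mod int k"
    using on_board by (simp add: press_power_mod)
  also have "\<dots> = (press_effect i n X r' c' - q + (if ?affected then t else 0)) mod int k"
    using assms(1,3) on_board unfolding reached_by_presses_def by (intro mod_add_cong) auto
  also have "\<dots> = (press_effect i n (add_presses X r c t) r' c' - q) mod int k"
    using assms(2) by (simp add: press_effect_add_presses on_board_def algebra_simps)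
  finally show "(press k i n r c ^^ m) B r' c' mod int k =
      (press_effect i n (add_presses X r c t) r' c' - q) mod int k" .
qed

fun row_presses :: "int \<Rightarrow> nat \<Rightarrow> int" where
  "row_presses q 0 = 0"
| "row_presses q (Suc 0) = 0"
| "row_presses q (Suc (Suc r)) = q - 3 * row_presses q (Suc r) - row_presses q r"

lemma row_presses_Suc: "row_presses q (Suc j) = - S q j"
  by (induction q j rule: S.induct) auto

lemma row_presses_rec:
  "2 \<le> r \<Longrightarrow> row_presses q r = q - 3 * row_presses q (r - 1) - row_presses q (r - 2)"
  by (cases "(q, r)" rule: row_presses.cases) auto

definition chase_presses :: "int \<Rightarrow> nat \<Rightarrow> nat \<Rightarrow> press_counts" where
  "chase_presses q r c = (\<lambda>r' c'. if r' < r \<or> (r' = r \<and> c' < c) then row_presses q r' else 0)"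

lemma press_effect_chase_presses_above:
  assumes "2 \<le> r" "r \<le> i" "c < n" "3 \<le> n"
  shows "press_effect i n (chase_presses q r c) (r - 1) c =
    3 * row_presses q (r - 1) + row_presses q (r - 2)"
  using assms by (simp add: press_effect_expand chase_presses_def numeral_eq_Suc)

lemma press_effect_chase_presses_complete:
  assumes "1 \<le> r" "r \<le> i" "c < n" "3 \<le> n"
  shows "press_effect i n (chase_presses q (Suc i) 0) r c =
    3 * row_presses q r + row_presses q (r - 1) + (if r < i then row_presses q (r + 1) else 0)"
  using assms by (auto simp: press_effect_expand chase_presses_def)

lemma chase_button_step:
  assumes reached: "reached_by_presses k i n q (chase_presses q r c) B"
    and reduced: "reduced_board k i n B"
    and "2 \<le> r" "r \<le> i" "c < n" "3 \<le> n" "0 < k"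
  shows "reached_by_presses k i n q (chase_presses q r (Suc c)) (chase_button k i n r B c)
    \<and> reduced_board k i n (chase_button k i n r B c)"
proof -
  define m where "m = nat ((- B (r - 1) c) mod int k)"
  have "on_board i n (r - 1) c"
    using assms(3-5) unfolding on_board_def by auto
  then have above:
      "B (r - 1) c mod int k = (press_effect i n (chase_presses q r c) (r - 1) c - q) mod int k"
    using reached unfolding reached_by_presses_def by blast
  have "int m = (- B (r - 1) c) mod int k"
    using \<open>0 < k\<close> by (simp add: m_def)
  also have "\<dots> = (- (press_effect i n (chase_presses q r c) (r - 1) c - q)) mod int k"
    using above by (metis mod_minus_eq)
  also have "\<dots> = row_presses q r mod int k"
    using press_effect_chase_presses_above[OF assms(3-6), of q] row_presses_rec[OF assms(3), of q]
    by (simp add: diff_diff_eq)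
  finally have "int m mod int k = row_presses q r mod int k"
    by simp
  moreover have "on_board i n r c"
    using assms(3-5) unfolding on_board_def by auto
  moreover have
      "chase_presses q r (Suc c) = add_presses (chase_presses q r c) r c (row_presses q r)"
    by (auto simp: chase_presses_def add_presses_def fun_eq_iff)
  ultimately show ?thesis
    unfolding chase_button_def m_def[symmetric]
    using reached_by_presses_press_power[OF reached] reduced_board_press_power[OF reduced \<open>0 < k\<close>]
    by simp
qed

lemma chase_row_step:
  assumes "reached_by_presses k i n q (chase_presses q r 0) B" "reduced_board k i n B"
    and "2 \<le> r" "r \<le> i" "3 \<le> n" "0 < k"
  shows "reached_by_presses k i n q (chase_presses q (Suc r) 0) (chase_row k i n B r)
    \<and> reduced_board k i n (chase_row k i n B r)"
proof -
  have "c \<le> n \<Longrightarrow>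
      reached_by_presses k i n q (chase_presses q r c) (foldl (chase_button k i n r) B [0..<c])
      \<and> reduced_board k i n (foldl (chase_button k i n r) B [0..<c])" for c
  proof (induction c)
    case (Suc c)
    then show ?case
      using chase_button_step[of k i n q r c "foldl (chase_button k i n r) B [0..<c]"] assms by simp
  qed (use assms in simp)
  moreover have
      "press_effect i n (chase_presses q r n) = press_effect i n (chase_presses q (Suc r) 0)"
    by (rule press_effect_cong) (auto simp: chase_presses_def)
  ultimately show ?thesis
    unfolding chase_row_def reached_by_presses_def by simp
qed

lemma chase_rows_invariant:
  assumes "1 \<le> r" "r \<le> i" "3 \<le> n" "0 < k"
  shows "reached_by_presses k i n q (chase_presses q (Suc r) 0)
           (foldl (chase_row k i n) (\<lambda>_ _. (- q) mod int k) [2..<Suc r])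
    \<and> reduced_board k i n (foldl (chase_row k i n) (\<lambda>_ _. (- q) mod int k) [2..<Suc r])"
  using assms(1,2)
proof (induction r rule: dec_induct)
  case base
  have "press_effect i n (chase_presses q 2 0) = press_effect i n (\<lambda>_ _. 0)"
    by (rule press_effect_cong) (auto simp: chase_presses_def less_2_cases_iff)
  also have "\<dots> = (\<lambda>_ _. 0)"
    by (simp add: press_effect_def fun_eq_iff)
  finally show ?case
    using \<open>0 < k\<close> by (simp add: reached_by_presses_def reduced_board_def numeral_2_eq_2)
next
  case (step r)
  then show ?case
    using chase_row_step[of k i n q "Suc r"] assms(3,4) by simp
qed

lemma one_pass_chase_uniform_board:
  assumes "0 < k" "3 \<le> n" "on_board i n r c"
  shows "one_pass_chase k i n (\<lambda>_ _. (- q) mod int k) r c = (if r < i then 0 else S q i mod int k)"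
proof -
  let ?B = "one_pass_chase k i n (\<lambda>_ _. (- q) mod int k)"
  let ?E = "3 * row_presses q r + row_presses q (r - 1) + (if r < i then row_presses q (r + 1) else 0)"
  have r: "1 \<le> r" "r \<le> i" "c < n"
    using assms(3) unfolding on_board_def by auto
  have "reached_by_presses k i n q (chase_presses q (Suc i) 0) ?B \<and> reduced_board k i n ?B"
    using chase_rows_invariant[of i i n k q] r assms(1,2) unfolding one_pass_chase_def by simp
  then have "?B r c = (press_effect i n (chase_presses q (Suc i) 0) r c - q) mod int k"
    using assms(3) unfolding reached_by_presses_def reduced_board_def by (metis mod_pos_pos_trivial)
  also have "\<dots> = (?E - q) mod int k"
    using press_effect_chase_presses_complete[OF r assms(2)] by simp
  also have "?E - q = (if r < i then 0 else S q i)"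
    using row_presses_rec[of "r + 1" q] row_presses_Suc[of q i] r by auto
  finally show ?thesis
    by simp
qed

theorem mainTheorem1:
  fixes k q n i :: nat
  assumes "k \<ge> 2" and "1 \<le> q" and "q \<le> k - 1" and "n \<ge> 3" and "i \<ge> 1"
  shows "one_pass_solvable k i n (\<lambda>_ _. int k - int q) \<longleftrightarrow> S (int q) i mod int k = 0"
proof -
  have initial_board: "(\<lambda>_ _. int k - int q) = (\<lambda>_ _. (- int q) mod int k)"
    using assms(2,3) by (simp add: zmod_zminus1_eq_if)
  have chase: "one_pass_chase k i n (\<lambda>_ _. int k - int q) r c =
      (if r < i then 0 else S (int q) i mod int k)" if "on_board i n r c" for r c
    unfolding initial_board using one_pass_chase_uniform_board[OF _ _ that] assms(1,4) by simp
  have "on_board i n i 0"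
    using assms unfolding on_board_def by simp
  then show ?thesis
    unfolding one_pass_solvable_def using chase by fastforce
qed

end
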